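(* Let $\tau_i\in\tau_H$ be a HI-task in the multi-rate fluid model, let $k_i$ be its earliest completion window, and let $R_i=\theta_{i,k_i}^H$ if $k_i\le n_H$ and $R_i=\theta_i^H$ if $k_i=n_H+1$. If $$\sum_{j:1\le j<k_i}\theta_{i,j}^H w_j + R_i\Big(T_i - C_i^L/\theta_i^L - \sum_{j:1\le j<k_i} w_j\Big)\ \ge\ C_i^H-C_i^L,$$ $$\forall j:\ k_i\le j\le n_H,\quad \theta_i^L\le\theta_{i,j}^H,\qquad\text{and}\qquad \theta_i^L\le\theta_i^H,$$ then every carry-over job of $\tau_i$ meets its deadline in the HI-mode (i.e., receives a total of $C_i^H$ units of execution by its deadline).
   Context: A dual-criticality implicit-deadline sporadic task system $\tau$ runs on $m$ identical processors. Each task $\tau_i=(T_i,\chi_i,C_i^L,C_i^H)$ has period and relative deadline $T_i>0$, criticality $\chi_i\in\{LO,HI\}$, and WCETs $C_i^L\le C_i^H$ ($C_i^L=C_i^H$ for LO-tasks); $u_i^L=C_i^L/T_i\le1$, $u_i^H=C_i^H/T_i\le1$. $\tau_H$ is the set of HI-tasks and $n_H=|\tau_H|$. The system starts in LO-mode; the mode switch occurs at the first instant a job of some HI-task $\tau_i$ has executed $C_i^L$ units without completing; from then on the system is in HI-mode, all LO-task jobs are discarded, and every HI-task job must receive $C_i^H$ units by its deadline. No HI-job needs more than $C_i^H$ units. Multi-rate fluid model (executing at rate $\theta$ means receiving $\theta\ell$ units of execution in any interval of length $\ell$): in LO-mode every job of $\tau_i$ executes at rate $\theta_i^L\in(0,1]$;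 measuring time from the mode switch, the transition period $[0,\sum_{j=1}^{n_H}w_j)$ is divided into consecutive windows of fixed durations $w_1,\dots,w_{n_H}\ge0$, window $j$ being $[\sum_{l<j}w_l,\sum_{l\le j}w_l)$, during which each job of HI-task $\tau_i$ executes at rate $\theta_{i,j}^H\in[0,1]$; after the transition period it executes at rate $\theta_i^H\in(0,1]$. A carry-over job of $\tau_i$ is a job released before the mode switch that has not completed at the mode switch. The earliest completion window of $\tau_i$ is the largest index $k_i\in\{1,\dots,n_H+1\}$ such that $\sum_{j:1\le j<k_i}w_j<T_i-C_i^L/\theta_i^L$ (so that, if $k_i\le n_H$, $\sum_{j:1\le j\le k_i}w_j\ge T_i-C_i^L/\theta_i^L$). *)

theory Defs
  imports Complex_Main
begin

text \<open>Time is measured from the mode switch (time 0). The transition period consists of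
windows 1..nH with durations w 1, ..., w nH; window j is
[win_start w j, win_start w (j+1)).\<close>

definition win_start :: "(nat \<Rightarrow> real) \<Rightarrow> nat \<Rightarrow> real" where
  "win_start w j = (\<Sum>l\<in>{1..<j}. w l)"

definition hi_exec :: "nat \<Rightarrow> (nat \<Rightarrow> real) \<Rightarrow> (nat \<Rightarrow> real) \<Rightarrow> real \<Rightarrow> real \<Rightarrow> real" where
  "hi_exec nH w thH thHf t =
     (\<Sum>j\<in>{1..nH}. thH j * max 0 (min (win_start w (j + 1)) t - win_start w j))
     + thHf * max 0 (t - win_start w (nH + 1))"

definition earliest_completion_window ::
  "nat \<Rightarrow> (nat \<Rightarrow> real) \<Rightarrow> real \<Rightarrow> real \<Rightarrow> real \<Rightarrow> nat" where
  "earliest_completion_window nH w T CL thL =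
     (GREATEST k. k \<in> {1..nH + 1} \<and> win_start w k < T - CL / thL)"

end

theory Submission
  imports Defs
begin

text \<open>Let D0 = T - CL/thL. By the choice of the earliest completion window k, D0 lies in
window k, so the execution received in [0, D0) is exactly the left-hand side of the first
condition and hence at least CH - CL. A carry-over job has executed thL * (-r) \<le> CL units
before the switch, so its deadline r + T is not before D0. From D0 on the job runs at
rates at least thL (second and third conditions), so during [D0, r + T) it receives at least
thL * (r + T - D0) = CL - thL * (-r) units, which is exactly what it still lacks.\<close>

definition time_in_window :: "(nat \<Rightarrow> real) \<Rightarrow> nat \<Rightarrow> real \<Rightarrow> real" where
  "time_in_window w j t = max 0 (min (win_start w (j + 1)) t - win_start w j)"

definition time_after_windows :: "nat \<Rightarrow> (nat \<Rightarrow> real) \<Rightarrow> real \<Rightarrow> real" where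
  "time_after_windows n w t = max 0 (t - win_start w (n + 1))"

lemma hi_exec_eq_time_in_window:
  "hi_exec n w thH thHf t =
     (\<Sum>j\<in>{1..n}. thH j * time_in_window w j t) + thHf * time_after_windows n w t"
  unfolding hi_exec_def time_in_window_def time_after_windows_def ..

lemma win_start_1 [simp]: "win_start w (Suc 0) = 0"
  by (simp add: win_start_def)

lemma win_start_Suc: "1 \<le> j \<Longrightarrow> win_start w (j + 1) = win_start w j + w j"
  unfolding win_start_def by (simp add: atLeastLessThanSuc add.commute)

lemma win_start_mono:
  assumes "\<And>j. j \<in> {1..n} \<Longrightarrow> 0 \<le> w j" "i \<le> j" "j \<le> n + 1"
  shows "win_start w i \<le> win_start w j"
  unfolding win_start_def by (rule sum_mono2) (use assms in auto)

lemma win_start_nonneg: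
  assumes "\<And>j. j \<in> {1..n} \<Longrightarrow> 0 \<le> w j" "j \<in> {1..n + 1}"
  shows "0 \<le> win_start w j"
  using win_start_mono[of n w 1 j, OF assms(1)] assms(2) by simp

lemma time_in_window_passed:
  "\<lbrakk>1 \<le> j; 0 \<le> w j; win_start w (j + 1) \<le> t\<rbrakk> \<Longrightarrow> time_in_window w j t = w j"
  using win_start_Suc[of j w] unfolding time_in_window_def by simp

lemma time_in_window_future:
  "t \<le> win_start w j \<Longrightarrow> time_in_window w j t = 0"
  unfolding time_in_window_def by simp

lemma time_in_window_current:
  "\<lbrakk>win_start w j \<le> t; t \<le> win_start w (j + 1)\<rbrakk>
    \<Longrightarrow> time_in_window w j t = t - win_start w j"
  unfolding time_in_window_def by simp

lemma time_in_window_mono: "t \<le> t' \<Longrightarrow> time_in_window w j t \<le> time_in_window w j t'"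
  unfolding time_in_window_def by simp

lemma time_after_windows_mono:
  "t \<le> t' \<Longrightarrow> time_after_windows n w t \<le> time_after_windows n w t'"
  unfolding time_after_windows_def by simp

lemma sum_time_in_window:
  assumes w: "\<And>j. j \<in> {1..n} \<Longrightarrow> 0 \<le> w j" and "m \<le> n" "0 \<le> t"
  shows "(\<Sum>j\<in>{1..m}. time_in_window w j t) = min t (win_start w (m + 1))"
  using \<open>m \<le> n\<close>
proof (induction m)
  case 0
  with \<open>0 \<le> t\<close> show ?case by simp
next
  case (Suc m)
  have "win_start w (m + 1) \<le> win_start w (Suc m + 1)"
    using win_start_mono[OF w] Suc.prems by simp
  with Suc show ?case by (simp add: time_in_window_def max_def min_def)
qed

lemma time_in_windows_total:
  assumes "\<And>j. j \<in> {1..n} \<Longrightarrow> 0 \<le> w j" "0 \<le> t"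
  shows "(\<Sum>j\<in>{1..n}. time_in_window w j t) + time_after_windows n w t = t"
  using sum_time_in_window[OF assms(1) order_refl assms(2)]
  by (simp add: time_after_windows_def max_def min_def)

lemma hi_exec_in_window:
  assumes w: "\<And>j. j \<in> {1..n} \<Longrightarrow> 0 \<le> w j"
    and k: "k \<in> {1..n + 1}"
    and lower: "win_start w k \<le> t"
    and upper: "k \<le> n \<Longrightarrow> t \<le> win_start w (k + 1)"
  shows "hi_exec n w thH thHf t =
           (\<Sum>j\<in>{1..<k}. thH j * w j)
           + (if k \<le> n then thH k else thHf) * (t - win_start w k)"
proof -
  have passed:
    "(\<Sum>j\<in>{1..<k}. thH j * time_in_window w j t) = (\<Sum>j\<in>{1..<k}. thH j * w j)"
  proof (rule sum.cong)
    fix j assume j: "j \<in> {1..<k}"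
    then have "win_start w (j + 1) \<le> win_start w k"
      using win_start_mono[OF w] k by simp
    with j k w[of j] lower show "thH j * time_in_window w j t = thH j * w j"
      by (simp add: time_in_window_passed)
  qed simp
  show ?thesis
  proof (cases "k \<le> n")
    case True
    have future: "time_in_window w j t = 0" if "k < j" "j \<le> n" for j
      using win_start_mono[of n w "k + 1" j, OF w] that upper True
      by (simp add: time_in_window_future)
    have "{1..n} = {1..<k} \<union> {k..n}" using k by auto
    then have "(\<Sum>j\<in>{1..n}. thH j * time_in_window w j t) =
                 (\<Sum>j\<in>{1..<k}. thH j * time_in_window w j t)
                 + thH k * time_in_window w k t
                 + (\<Sum>j\<in>{Suc k..n}. thH j * time_in_window w j t)"
      using True sum.union_disjoint[of "{1..<k}" "{k..n}" "\<lambda>j. thH j * time_in_window w j t"]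
      by (simp add: sum.atLeast_Suc_atMost ivl_disj_int add.assoc)
    also have "\<dots> = (\<Sum>j\<in>{1..<k}. thH j * w j) + thH k * (t - win_start w k)"
      using passed future time_in_window_current[OF lower upper[OF True]] by simp
    finally have "(\<Sum>j\<in>{1..n}. thH j * time_in_window w j t) =
                    (\<Sum>j\<in>{1..<k}. thH j * w j) + thH k * (t - win_start w k)" .
    moreover have "time_after_windows n w t = 0"
      using win_start_mono[of n w "k + 1" "n + 1", OF w] True upper
      by (simp add: time_after_windows_def)
    ultimately show ?thesis using True by (simp add: hi_exec_eq_time_in_window)
  next
    case False
    with k have "k = n + 1" by simp
    with passed lower show ?thesis
      by (simp add: hi_exec_eq_time_in_window time_after_windows_def
          atLeastLessThanSuc_atLeastAtMost)
  qed
qed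

text \<open>Windows before k are already over at t0, so from t0 on only windows with
rate at least \<theta> contribute, and they partition [t0, t).\<close>

lemma hi_exec_increment:
  assumes w: "\<And>j. j \<in> {1..n} \<Longrightarrow> 0 \<le> w j"
    and k: "k \<in> {1..n + 1}"
    and t0: "win_start w k \<le> t0" "t0 \<le> t"
    and rates: "\<And>j. k \<le> j \<Longrightarrow> j \<le> n \<Longrightarrow> \<theta> \<le> thH j" "\<theta> \<le> thHf"
  shows "hi_exec n w thH thHf t0 + \<theta> * (t - t0) \<le> hi_exec n w thH thHf t"
proof -
  define d where "d j = time_in_window w j t - time_in_window w j t0" for j
  define d_after where "d_after = time_after_windows n w t - time_after_windows n w t0"
  have "0 \<le> t0" using win_start_nonneg[of n w k, OF w k] t0 by simp
  have d_nonneg: "0 \<le> d j" for j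
    using time_in_window_mono[OF t0(2)] by (simp add: d_def)
  have d_passed: "d j = 0" if "1 \<le> j" "j < k" for j
  proof -
    have "win_start w (j + 1) \<le> t0"
      using win_start_mono[of n w "j + 1" k, OF w] that k t0 by simp
    with that k w[of j] t0 show ?thesis by (simp add: d_def time_in_window_passed)
  qed
  have "\<theta> * d j \<le> thH j * d j" if "j \<in> {1..n}" for j
    using that d_passed[of j] rates(1)[of j] d_nonneg[of j]
    by (cases "j < k") (auto intro: mult_right_mono)
  then have "(\<Sum>j\<in>{1..n}. \<theta> * d j) \<le> (\<Sum>j\<in>{1..n}. thH j * d j)"
    by (rule sum_mono)
  moreover have "\<theta> * d_after \<le> thHf * d_after"
    using rates(2) time_after_windows_mono[OF t0(2)] by (simp add: d_after_def mult_right_mono)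
  moreover have "(\<Sum>j\<in>{1..n}. d j) + d_after = t - t0"
    using time_in_windows_total[of n w t0, OF w] time_in_windows_total[of n w t, OF w]
      \<open>0 \<le> t0\<close> t0
    by (simp add: d_def d_after_def sum_subtractf)
  then have "\<theta> * (t - t0) = (\<Sum>j\<in>{1..n}. \<theta> * d j) + \<theta> * d_after"
    by (metis distrib_left sum_distrib_left)
  moreover have "hi_exec n w thH thHf t - hi_exec n w thH thHf t0 =
                   (\<Sum>j\<in>{1..n}. thH j * d j) + thHf * d_after"
    by (simp add: hi_exec_eq_time_in_window d_def d_after_def sum_subtractf right_diff_distrib)
  ultimately show ?thesis by linarith
qed

lemma earliest_completion_windowD:
  assumes "\<exists>k'. k' \<in> {1..nH + 1} \<and> win_start w k' < T - CL / thL"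
    and "k = earliest_completion_window nH w T CL thL"
  shows "k \<in> {1..nH + 1}" "win_start w k < T - CL / thL"
    and "k \<le> nH \<Longrightarrow> T - CL / thL \<le> win_start w (k + 1)"
proof -
  let ?P = "\<lambda>k. k \<in> {1..nH + 1} \<and> win_start w k < T - CL / thL"
  have bound: "\<And>y. ?P y \<Longrightarrow> y \<le> nH + 1" by auto
  have "?P k"
    using assms GreatestI_nat[where P = ?P, OF _ bound]
    unfolding earliest_completion_window_def by blast
  then show "k \<in> {1..nH + 1}" "win_start w k < T - CL / thL" by auto
  assume "k \<le> nH"
  have "\<not> ?P (k + 1)"
    using assms(2) Greatest_le_nat[where P = ?P, OF _ bound, of "k + 1"]
    unfolding earliest_completion_window_def by auto
  with \<open>k \<le> nH\<close> show "T - CL / thL \<le> win_start w (k + 1)" by auto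
qed

theorem theorem1:
  fixes nH :: nat and T CL CH thL thHf :: real
    and w thH :: "nat \<Rightarrow> real" and k :: nat and r :: real
  assumes nH: "nH \<ge> 1"
    and T: "T > 0"
    and C: "0 \<le> CL" "CL \<le> CH" "CL / T \<le> 1" "CH / T \<le> 1"
    and thL: "0 < thL" "thL \<le> 1"
    and thH: "\<And>j. j \<in> {1..nH} \<Longrightarrow> 0 \<le> thH j \<and> thH j \<le> 1"
    and thHf: "0 < thHf" "thHf \<le> 1"
    and w: "\<And>j. j \<in> {1..nH} \<Longrightarrow> 0 \<le> w j"
    and ecw_exists: "\<exists>k'. k' \<in> {1..nH + 1} \<and> win_start w k' < T - CL / thL"
    and k_def: "k = earliest_completion_window nH w T CL thL"
    and cond1: "(\<Sum>j\<in>{1..<k}. thH j * w j)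
                 + (if k \<le> nH then thH k else thHf) * (T - CL / thL - win_start w k)
                 \<ge> CH - CL"
    and cond2: "\<And>j. k \<le> j \<Longrightarrow> j \<le> nH \<Longrightarrow> thL \<le> thH j"
    and cond3: "thL \<le> thHf"
    \<comment> \<open>a carry-over job: released at time r before the mode switch (time 0), executed at
        rate thL during [r, 0), and (since the switch happens no later than the first instant
        a HI-job has executed CL units) it has executed at most CL units at the switch\<close>
    and rel: "r < 0"
    and lo_exec: "thL * (0 - r) \<le> CL"
  shows "thL * (0 - r) + hi_exec nH w thH thHf (r + T) \<ge> CH"
proof -
  define D0 where "D0 = T - CL / thL"
  note window = earliest_completion_windowD[OF ecw_exists k_def, folded D0_def]
  have "hi_exec nH w thH thHf D0 \<ge> CH - CL"
    using hi_exec_in_window[OF w window(1)] window(2,3) cond1 by (simp add: D0_def)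
  moreover have "D0 \<le> r + T" and "thL * (r + T - D0) = CL + thL * r"
    using lo_exec thL by (simp_all add: D0_def field_simps)
  moreover have
    "hi_exec nH w thH thHf D0 + thL * (r + T - D0) \<le> hi_exec nH w thH thHf (r + T)"
    using hi_exec_increment[OF w window(1)] window(2) cond2 cond3 \<open>D0 \<le> r + T\<close> by simp
  ultimately show ?thesis by simp
qed

end
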